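(* Let $K=\mathbb{Q}(\sqrt2)$ and $\delta\in K^*$. Let $q_1(t)=t^2-(4+2\sqrt2)t-3-2\sqrt2$ and $p(t)=t^4-12t^3+2t^2+12t+1$, let $H_\delta$ be the genus $2$ curve $\delta W^2=q_1(t)p(t)$ and $E_\delta$ the elliptic curve $\delta y^2=x^3+5\sqrt2x^2-x$. Then $\varphi(t,W)=\left(\frac{-2(-3+2\sqrt2)\,q_1(t)}{(t-\sqrt2+1)^2},\ \frac{3(-4+3\sqrt2)\,W}{(t-\sqrt2+1)^3}\right)$ defines a non-constant morphism $\varphi:H_\delta\to E_\delta$. *)

theory Defs
  imports Complex_Main
begin

text \<open>We work inside the complex numbers, which contain an algebraic closure of
  K = Q(sqrt 2); sqrt 2 denotes the positive real square root.\<close>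

definition r2 :: complex where "r2 = complex_of_real (sqrt 2)"

definition K :: "complex set" where
  "K = {of_rat a + of_rat b * r2 | a b. True}"

definition q1 :: "complex \<Rightarrow> complex" where
  "q1 t = t^2 - (4 + 2*r2) * t - 3 - 2*r2"

definition p :: "complex \<Rightarrow> complex" where
  "p t = t^4 - 12*t^3 + 2*t^2 + 12*t + 1"

definition on_H :: "complex \<Rightarrow> complex \<Rightarrow> complex \<Rightarrow> bool" where
  "on_H \<delta> t W \<longleftrightarrow> \<delta> * W^2 = q1 t * p t"

definition on_E :: "complex \<Rightarrow> complex \<Rightarrow> complex \<Rightarrow> bool" where
  "on_E \<delta> x y \<longleftrightarrow> \<delta> * y^2 = x^3 + 5*r2*x^2 - x"

definition phi_x :: "complex \<Rightarrow> complex" where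
  "phi_x t = (-2 * (-3 + 2*r2) * q1 t) / (t - r2 + 1)^2"

definition phi_y :: "complex \<Rightarrow> complex \<Rightarrow> complex" where
  "phi_y t W = (3 * (-4 + 3*r2) * W) / (t - r2 + 1)^3"

end

theory Submission
  imports Defs
begin

text \<open>The x-coordinate of the map is c q1(t)/D^2 with D = t - sqrt2 + 1, and the
  quartic p satisfies 9(3 sqrt2 - 4)^2 p = c^3 q1^2 + 5 sqrt2 c^2 q1 D^2 - c D^4 for
  c = 6 - 4 sqrt2. Multiplying this identity by q1 and dividing by D^6 turns the equation
  of H_delta into that of E_delta. The map is non-constant because W and -W give
  different y-coordinates over a point t with q1(t) p(t) \<noteq> 0, e.g. t = 0.
  Nothing uses delta \<in> K: both facts hold for every nonzero complex delta.\<close>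

lemma r2_squared: "r2^2 = 2"
  unfolding r2_def by (simp flip: of_real_power)

lemma r2_ne_one: "r2 \<noteq> 1"
  using r2_squared by auto

lemma three_r2_ne_four: "3 * r2 \<noteq> 4"
proof
  assume "3 * r2 = 4"
  then have "(3 * r2)^2 = 16" by simp
  moreover have "(3 * r2)^2 = 18" using r2_squared by (simp add: power_mult_distrib)
  ultimately show False by simp
qed

lemma p_in_terms_of_q1:
  "(3 * (-4 + 3*r2))^2 * p t
     = (6 - 4*r2)^3 * (q1 t)^2 + 5*r2 * (6 - 4*r2)^2 * q1 t * (t - r2 + 1)^2
       - (6 - 4*r2) * (t - r2 + 1)^4"
proof -
  have h: "r2 * r2 = 2" using r2_squared by (simp add: power2_eq_square)
  have h2: "r2 * (r2 * x) = 2 * x" for x using h by (simp add: mult.assoc[symmetric])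
  show ?thesis unfolding p_def q1_def
    by (simp add: algebra_simps power2_eq_square power3_eq_cube power4_eq_xxxx h h2)
qed

lemma weighted_substitution_on_cubic:
  fixes \<delta> W q P a b c D :: "'a::field"
  assumes "D \<noteq> 0"
    and "\<delta> * W^2 = q * P"
    and "a^2 * P = c^3 * q^2 + b * c^2 * q * D^2 - c * D^4"
  shows "\<delta> * (a * W / D^3)^2 = (c * q / D^2)^3 + b * (c * q / D^2)^2 - c * q / D^2"
proof -
  have "\<delta> * (a * W / D^3)^2 = q * (a^2 * P) / D^6"
    using assms(2) by (simp add: power_divide power_mult_distrib flip: power_mult)
  also have "\<dots> = q * (c^3 * q^2 + b * c^2 * q * D^2 - c * D^4) / D^6"
    by (simp only: assms(3))
  also have "\<dots> = (c * q / D^2)^3 + b * (c * q / D^2)^2 - c * q / D^2"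
    using assms(1) by (simp add: field_simps power_divide eval_nat_numeral)
  finally show ?thesis .
qed

lemma phi_x_eq: "phi_x t = (6 - 4*r2) * q1 t / (t - r2 + 1)^2"
  by (simp add: phi_x_def algebra_simps)

lemma phi_maps_H_to_E:
  assumes "on_H \<delta> t W" and "t \<noteq> r2 - 1"
  shows "on_E \<delta> (phi_x t) (phi_y t W)"
proof -
  have D: "t - r2 + 1 \<noteq> 0" using assms(2) by (auto simp: algebra_simps)
  from weighted_substitution_on_cubic[OF D _ p_in_terms_of_q1] assms(1)
  have "\<delta> * (3 * (-4 + 3*r2) * W / (t - r2 + 1)^3)^2
      = ((6 - 4*r2) * q1 t / (t - r2 + 1)^2)^3 + 5*r2 * ((6 - 4*r2) * q1 t / (t - r2 + 1)^2)^2
        - (6 - 4*r2) * q1 t / (t - r2 + 1)^2"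
    by (simp add: on_H_def)
  then show ?thesis
    by (simp add: on_E_def phi_x_eq phi_y_def)
qed

lemma phi_y_sign_change:
  assumes "t \<noteq> r2 - 1" and "W \<noteq> 0"
  shows "phi_y t W \<noteq> phi_y t (- W)"
proof -
  have "t - r2 + 1 \<noteq> 0" using assms(1) by (auto simp: algebra_simps)
  moreover have "3*r2 - 4 \<noteq> 0" using three_r2_ne_four by simp
  ultimately have "phi_y t W \<noteq> 0" using assms(2) by (simp add: phi_y_def algebra_simps)
  moreover have "phi_y t (- W) = - phi_y t W" by (simp add: phi_y_def)
  ultimately show ?thesis by simp
qed

lemma q1_p_at_zero_ne_zero: "q1 0 * p 0 \<noteq> 0"
proof -
  have "Re (q1 0 * p 0) = -3 - 2 * sqrt 2" by (simp add: q1_def p_def r2_def)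
  moreover have "-3 - 2 * sqrt 2 < (0::real)"
    using real_sqrt_ge_zero[of 2] by linarith
  ultimately show ?thesis by auto
qed

lemma H_has_nonzero_W_at_zero:
  assumes "\<delta> \<noteq> 0"
  obtains W where "on_H \<delta> 0 W" and "W \<noteq> 0"
proof
  let ?W = "csqrt (q1 0 * p 0 / \<delta>)"
  show "on_H \<delta> 0 ?W" using assms by (simp add: on_H_def)
  show "?W \<noteq> 0" using assms q1_p_at_zero_ne_zero by simp
qed

theorem lemma7p3:
  fixes \<delta> :: complex
  assumes "\<delta> \<in> K" and "\<delta> \<noteq> 0"
  shows "(\<forall>t W. on_H \<delta> t W \<and> t \<noteq> r2 - 1 \<longrightarrow> on_E \<delta> (phi_x t) (phi_y t W))
       \<and> (\<exists>t1 W1 t2 W2. on_H \<delta> t1 W1 \<and> on_H \<delta> t2 W2 \<and> t1 \<noteq> r2 - 1 \<and> t2 \<noteq> r2 - 1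
            \<and> (phi_x t1, phi_y t1 W1) \<noteq> (phi_x t2, phi_y t2 W2))"
proof (intro conjI allI impI; (elim conjE)?)
  show "on_E \<delta> (phi_x t) (phi_y t W)" if "on_H \<delta> t W" "t \<noteq> r2 - 1" for t W
    using phi_maps_H_to_E that .
next
  obtain W where W: "on_H \<delta> 0 W" "W \<noteq> 0"
    using H_has_nonzero_W_at_zero assms(2) by blast
  have t0: "0 \<noteq> r2 - 1" using r2_ne_one by simp
  have "on_H \<delta> 0 (- W)" using W(1) by (simp add: on_H_def)
  moreover have "phi_y 0 W \<noteq> phi_y 0 (- W)" using phi_y_sign_change[OF t0 W(2)] .
  ultimately show "\<exists>t1 W1 t2 W2. on_H \<delta> t1 W1 \<and> on_H \<delta> t2 W2 \<and> t1 \<noteq> r2 - 1 \<and> t2 \<noteq> r2 - 1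
            \<and> (phi_x t1, phi_y t1 W1) \<noteq> (phi_x t2, phi_y t2 W2)"
    using W(1) t0 by blast
qed

end
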